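(* Let $\Omega\subset\mathbb{R}^d$, $N\in\mathbb{N}$, $D=Nd$, and let $\mathcal{C}:\Omega\to\mathcal{Z}$ be smooth, where $\mathcal{Z}$ is the set of block-diagonal symmetric positive definite $D\times D$ matrices with $N$ blocks of size $d\times d$. Let $f(\vec{x},\vec{q})=\exp(-\tfrac12\vec{q}^\top\mathcal{C}(\vec{x})^{-1}\vec{q})/\sqrt{(2\pi)^D\det\mathcal{C}(\vec{x})}$ for $\vec{q}\in\mathbb{R}^D$, and $$\rho(\vec{x},\vec{q})=\sum_{i=1}^d\vec{q}^\top\big(\mathcal{C}^{-1}\partial_{x_i}\mathcal{C}\big)^2\mathcal{C}^{-1}\vec{q}-\tfrac12\sum_{i=1}^d\operatorname{tr}\big((\mathcal{C}^{-1}\partial_{x_i}\mathcal{C})^2\big)-\tfrac14\sum_{i=1}^d\Big[\vec{q}^\top\mathcal{C}^{-1}\partial_{x_i}\mathcal{C}\,\mathcal{C}^{-1}\vec{q}-\operatorname{tr}(\mathcal{C}^{-1}\partial_{x_i}\mathcal{C})\Big]^2$$ with $\mathcal{C}=\mathcal{C}(\vec{x})$. Then $\rho f$ is orthogonal to the tangent space $T_f\mathcal{M}_\Phi$ with respect to the weighted inner product $\langle g,h\rangle_f=\int_{\mathbb{R}^D}g\,h\,\frac{\mathrm{d}\vec{q}}{f}$ (the one defining $P_f$), i.e. for a.e. $\vec{x}\in\Omega$ and every $\varphi\in T_f\mathcal{M}_\Phi$, $\int_{\mathbb{R}^D}\rho(\vec{x},\vec{q})\,\varphi(\vec{x},\v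ec{q})\,\mathrm{d}\vec{q}=0$.
   Context: The tangent space of the Gaussian manifold at $f$ is $T_f\mathcal{M}_\Phi=\{\varphi:\varphi(\vec{x},\vec{q})=(\vec{q}^\top A(\vec{x})\vec{q}-\operatorname{tr}(A(\vec{x})\mathcal{C}(\vec{x})))f(\vec{x},\vec{q}),\ A(\vec{x})\text{ block-diagonal symmetric with }N\text{ blocks of size }d\times d\}$ (intersected with the weighted Sobolev space $\mathcal{H}$). $\rho$ is the remainder arising from the center-of-mass diffusion term $-\varepsilon\Delta_{\vec{x}}f$. *)

theory Defs
  imports "HOL-Analysis.Analysis"
begin

text \<open>Index of the configuration space R^D, D = N d: pairs (particle k, coordinate a),
  with 'n a type of N elements and 'd a type of d elements.\<close>

type_synonym ('n, 'd) mat = "real ^ ('n \<times> 'd) ^ ('n \<times> 'd)"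

definition block_diag :: "('n::finite, 'd::finite) mat \<Rightarrow> bool" where
  "block_diag M \<longleftrightarrow> (\<forall>k a l b. k \<noteq> l \<longrightarrow> M $ (k, a) $ (l, b) = 0)"

definition sym_mat :: "('n::finite, 'd::finite) mat \<Rightarrow> bool" where
  "sym_mat M \<longleftrightarrow> transpose M = M"

definition pos_def :: "('n::finite, 'd::finite) mat \<Rightarrow> bool" where
  "pos_def M \<longleftrightarrow> (\<forall>q. q \<noteq> 0 \<longrightarrow> q \<bullet> (M *v q) > 0)"

definition Zset :: "('n::finite, 'd::finite) mat set" where
  "Zset = {M. block_diag M \<and> sym_mat M \<and> pos_def M}"

fun Ck_on :: "nat \<Rightarrow> ('a::real_normed_vector \<Rightarrow> 'b::real_normed_vector) \<Rightarrow> 'a set \<Rightarrow> bool" where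
  "Ck_on 0 g S = continuous_on S g"
| "Ck_on (Suc k) g S = (\<exists>g'. (\<forall>x\<in>S. (g has_derivative g' x) (at x)) \<and>
      continuous_on S g \<and> (\<forall>h. Ck_on k (\<lambda>x. g' x h) S))"

definition smooth_on :: "'a::real_normed_vector set \<Rightarrow> ('a \<Rightarrow> 'b::real_normed_vector) \<Rightarrow> bool" where
  "smooth_on S g \<longleftrightarrow> (\<forall>k. Ck_on k g S)"

definition partialC :: "(real ^ 'd \<Rightarrow> ('n::finite, 'd::finite) mat) \<Rightarrow> 'd \<Rightarrow> real ^ 'd \<Rightarrow> ('n, 'd) mat" where
  "partialC C i x = vector_derivative (\<lambda>t. C (x + t *\<^sub>R axis i 1)) (at 0)"

definition gaussian :: "(real ^ 'd \<Rightarrow> ('n::finite, 'd::finite) mat) \<Rightarrow> real ^ 'd \<Rightarrow> real ^ ('n \<times> 'd) \<Rightarrow> real" where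
  "gaussian C x q = exp (- (1/2) * (q \<bullet> (matrix_inv (C x) *v q)))
      / sqrt ((2 * pi) ^ CARD('n \<times> 'd) * det (C x))"

definition rho :: "(real ^ 'd \<Rightarrow> ('n::finite, 'd::finite) mat) \<Rightarrow> real ^ 'd \<Rightarrow> real ^ ('n \<times> 'd) \<Rightarrow> real" where
  "rho C x q =
     (let Ci = matrix_inv (C x); P = (\<lambda>i. Ci ** partialC C i x) in
       (\<Sum>i\<in>UNIV. q \<bullet> ((P i ** P i ** Ci) *v q))
       - (1/2) * (\<Sum>i\<in>UNIV. trace (P i ** P i))
       - (1/4) * (\<Sum>i\<in>UNIV. (q \<bullet> ((P i ** Ci) *v q) - trace (P i))\<^sup>2))"

text \<open>Tangent space T_f M_Phi (without the intersection with the weighted Sobolev space).\<close>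
definition tangent_space :: "(real ^ 'd \<Rightarrow> ('n::finite, 'd::finite) mat)
    \<Rightarrow> (real ^ 'd \<Rightarrow> real ^ ('n \<times> 'd) \<Rightarrow> real) set" where
  "tangent_space C = {\<phi>. \<exists>A. (\<forall>x. block_diag (A x) \<and> sym_mat (A x)) \<and>
      \<phi> = (\<lambda>x q. (q \<bullet> (A x *v q) - trace (A x ** C x)) * gaussian C x q)}"

end

theory Submission
  imports Defs "HOL-Probability.Distributions"
begin

(* Fix x, write C for the covariance C(x) and g(q) = exp (- q.C^-1 q / 2), so that the Gaussian is
   g divided by a constant, and write Y_A(q) = q.Aq - tr(AC); the tangent vectors at f are exactly
   the functions Y_A f.  Gaussian integration by parts, int ((C^-1 q).v) h g = int (d_v h) g, taken
   along the columns v = C e_a of the covariance, turns int Y_M h g into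
   sum_a int (Mq)_a (d_(C e_a) h) g.
   This gives the first three moments of the centred quadratics Y_M needed: int Y_M g = 0,
   int (q.Nq) Y_S g = 2 tr(N^T C S C) int g and int Y_M^2 Y_A g = 8 tr(MCMCAC) int g.
   With M_i = C^-1 (d_i C) C^-1 the i-th summand of rho is q.(M_i C M_i)q - const - Y_(M_i)^2 / 4,
   and its product with Y_A integrates to (2 - 8/4) tr(M_i C M_i C A C) int g = 0.  All integrands
   are polynomials times g; the integration by parts itself is justified by dominated convergence
   of difference quotients. *)

section \<open>Polynomially weighted Gaussians\<close>

lemma integrable_power_one_plus_abs_times_gaussian:
  fixes \<nu> :: real
  assumes "\<nu> > 0"
  shows "integrable lborel (\<lambda>t::real. (1 + \<bar>t\<bar>)^k * exp (- \<nu> * t\<^sup>2))"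
proof -
  define \<sigma> where "\<sigma> = sqrt (1 / (2 * \<nu>))"
  define c where "c = sqrt (2 * pi * \<sigma>\<^sup>2)"
  have "\<sigma> > 0" using assms by (simp add: \<sigma>_def)
  have exp_eq: "exp (- \<nu> * t\<^sup>2) = c * normal_density 0 \<sigma> t" for t
    using assms \<open>\<sigma> > 0\<close> by (simp add: normal_density_def c_def \<sigma>_def field_simps)
  have "integrable lborel (\<lambda>t. normal_density 0 \<sigma> t * \<bar>t\<bar>^k)"
    using integrable_normal_moment_abs[of \<sigma> 0 k] \<open>\<sigma> > 0\<close> by simp
  then have majorant: "integrable lborel
      (\<lambda>t. 2^k * c * (normal_density 0 \<sigma> t + normal_density 0 \<sigma> t * \<bar>t\<bar>^k))"
    using \<open>\<sigma> > 0\<close>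
    by (intro integrable_mult_right Bochner_Integration.integrable_add integrable_normal_density)
  have power_bound: "(1 + \<bar>t\<bar>)^k \<le> 2^k * (1 + \<bar>t\<bar>^k)" for t :: real
  proof -
    have "(1 + \<bar>t\<bar>)^k \<le> (2 * max 1 \<bar>t\<bar>)^k" by (intro power_mono) auto
    also have "\<dots> \<le> 2^k * (1 + \<bar>t\<bar>^k)"
      by (cases "1 \<le> \<bar>t\<bar>") (auto simp: power_mult_distrib max_def)
    finally show ?thesis .
  qed
  show ?thesis
  proof (rule Bochner_Integration.integrable_bound[OF majorant])
    show "AE t in lborel. norm ((1 + \<bar>t\<bar>)^k * exp (- \<nu> * t\<^sup>2))
        \<le> norm (2^k * c * (normal_density 0 \<sigma> t + normal_density 0 \<sigma> t * \<bar>t\<bar>^k))"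
    proof (rule AE_I2)
      fix t :: real
      have density_nonneg: "0 \<le> c * normal_density 0 \<sigma> t"
        by (simp add: c_def normal_density_nonneg)
      have "norm ((1 + \<bar>t\<bar>)^k * exp (- \<nu> * t\<^sup>2))
          = (1 + \<bar>t\<bar>)^k * (c * normal_density 0 \<sigma> t)"
        unfolding exp_eq using density_nonneg by (simp add: abs_mult c_def)
      also have "\<dots> \<le> 2^k * (1 + \<bar>t\<bar>^k) * (c * normal_density 0 \<sigma> t)"
        using power_bound density_nonneg by (rule mult_right_mono)
      also have "\<dots> = 2^k * c * (normal_density 0 \<sigma> t + normal_density 0 \<sigma> t * \<bar>t\<bar>^k)"
        by (simp add: algebra_simps)
      finally show "norm ((1 + \<bar>t\<bar>)^k * exp (- \<nu> * t\<^sup>2))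
          \<le> norm (2^k * c * (normal_density 0 \<sigma> t + normal_density 0 \<sigma> t * \<bar>t\<bar>^k))"
        by simp
    qed
  qed measurable
qed

lemma one_plus_sum_le_prod_one_plus:
  fixes x :: "'b \<Rightarrow> real"
  assumes "\<And>b. b \<in> S \<Longrightarrow> x b \<ge> 0"
  shows "1 + (\<Sum>b\<in>S. x b) \<le> (\<Prod>b\<in>S. 1 + x b)"
  using assms
proof (induction S rule: infinite_finite_induct)
  case (insert a S)
  have "0 \<le> x a" "0 \<le> (\<Sum>b\<in>S. x b)" using insert.prems by (auto intro: sum_nonneg)
  then have "1 + (\<Sum>b\<in>insert a S. x b) \<le> (1 + x a) * (1 + (\<Sum>b\<in>S. x b))"
    using insert.hyps by (simp add: algebra_simps)
  also have "\<dots> \<le> (1 + x a) * (\<Prod>b\<in>S. 1 + x b)"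
    using insert \<open>0 \<le> x a\<close> by (intro mult_left_mono) auto
  finally show ?case using insert.hyps by simp
qed auto

text \<open>By Tonelli, the majorant factorises over the coordinates into one-dimensional integrals.\<close>
lemma integrable_power_one_plus_norm_times_gaussian:
  fixes \<nu> :: real
  assumes "\<nu> > 0"
  shows "integrable lborel (\<lambda>q::'a::euclidean_space. (1 + norm q)^k * exp (- \<nu> * (norm q)\<^sup>2))"
proof -
  define W where "W q = (\<Prod>b\<in>Basis. (1 + \<bar>q \<bullet> b\<bar>)^k * exp (- \<nu> * (q \<bullet> b)\<^sup>2))"
    for q :: 'a
  have W_nonneg: "W q \<ge> 0" for q unfolding W_def by (intro prod_nonneg) auto
  have "(\<integral>\<^sup>+q. ennreal (norm (W q)) \<partial>lborel)
      = (\<integral>\<^sup>+q. (\<Prod>b\<in>Basis. ennreal ((1 + \<bar>(q::'a) \<bullet> b\<bar>)^k * exp (- \<nu> * (q \<bullet> b)\<^sup>2)))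
          \<partial>lborel)"
    using W_nonneg by (intro nn_integral_cong) (simp add: W_def prod_ennreal)
  also have "\<dots> = (\<Prod>b\<in>(Basis::'a set).
      \<integral>\<^sup>+t. ennreal ((1 + \<bar>t\<bar>)^k * exp (- \<nu> * t\<^sup>2)) \<partial>lborel)"
    by (rule nn_integral_lborel_prod) auto
  also have "\<dots> < \<infinity>"
    using integrable_power_one_plus_abs_times_gaussian[OF assms, of k]
    by (simp add: integrable_iff_bounded power_less_top_ennreal)
  finally have W_integrable: "integrable lborel W"
    unfolding integrable_iff_bounded W_def by simp
  have bound: "(1 + norm q)^k * exp (- \<nu> * (norm q)\<^sup>2) \<le> W q" for q
  proof -
    have "1 + norm q \<le> 1 + (\<Sum>b\<in>Basis. \<bar>q \<bullet> b\<bar>)" using norm_le_l1[of q] by simp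
    also have "\<dots> \<le> (\<Prod>b\<in>Basis. 1 + \<bar>q \<bullet> b\<bar>)"
      by (rule one_plus_sum_le_prod_one_plus) auto
    finally have power_le: "(1 + norm q)^k \<le> (\<Prod>b\<in>Basis. (1 + \<bar>q \<bullet> b\<bar>)^k)"
      by (metis (no_types) norm_ge_zero add_nonneg_nonneg zero_le_one power_mono prod_power_distrib)
    have "(norm q)\<^sup>2 = (\<Sum>b\<in>Basis. (q \<bullet> b)\<^sup>2)"
      unfolding power2_norm_eq_inner by (subst euclidean_inner) (simp add: power2_eq_square)
    then have exp_eq: "exp (- \<nu> * (norm q)\<^sup>2) = (\<Prod>b\<in>Basis. exp (- \<nu> * (q \<bullet> b)\<^sup>2))"
      by (simp add: sum_distrib_left exp_sum sum_negf[symmetric])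
    show ?thesis
      unfolding W_def prod.distrib exp_eq[symmetric] by (intro mult_right_mono power_le) simp
  qed
  show ?thesis
    using W_integrable
  proof (rule Bochner_Integration.integrable_bound)
    show "AE q in lborel. norm ((1 + norm q)^k * exp (- \<nu> * (norm q)\<^sup>2)) \<le> norm (W q)"
      using bound W_nonneg by (intro AE_I2) simp
  qed measurable
qed

lemma shifted_gaussian_majorant:
  fixes q y :: "'a::real_normed_vector" and \<mu> :: real
  assumes "norm (y - q) \<le> r" and "\<mu> \<ge> 0"
  shows "(1 + norm y)^k * exp (- (\<mu>/2) * (norm y)\<^sup>2)
    \<le> (1 + r)^k * exp (\<mu>/2 * r\<^sup>2) * ((1 + norm q)^k * exp (- (\<mu>/4) * (norm q)\<^sup>2))"
proof -
  have y: "norm y \<le> norm q + r" and q: "norm q \<le> norm y + r" and "0 \<le> r"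
    using assms(1) norm_triangle_ineq2[of y q] norm_triangle_ineq2[of q y] norm_ge_zero[of "y - q"]
    by (auto simp: norm_minus_commute)
  have "1 + norm y \<le> (1 + r) * (1 + norm q)"
    using y mult_nonneg_nonneg[OF \<open>0 \<le> r\<close> norm_ge_zero[of q]] by (simp add: algebra_simps)
  then have poly: "(1 + norm y)^k \<le> (1 + r)^k * (1 + norm q)^k"
    by (metis power_mono power_mult_distrib norm_ge_zero add_nonneg_nonneg zero_le_one)
  have "(norm q)\<^sup>2 \<le> (norm y + r)\<^sup>2" using q by (intro power_mono) auto
  moreover have "(norm y + r)\<^sup>2 + (norm y - r)\<^sup>2 = 2 * (norm y)\<^sup>2 + 2 * r\<^sup>2"
    by (simp add: power2_eq_square algebra_simps)
  ultimately have "(norm q)\<^sup>2 \<le> 2 * (norm y)\<^sup>2 + 2 * r\<^sup>2"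
    using zero_le_power2[of "norm y - r"] by linarith
  then have "\<mu>/4 * (norm q)\<^sup>2 \<le> \<mu>/4 * (2 * (norm y)\<^sup>2 + 2 * r\<^sup>2)"
    using assms(2) by (intro mult_left_mono) auto
  then have "exp (- (\<mu>/2) * (norm y)\<^sup>2) \<le> exp (\<mu>/2 * r\<^sup>2) * exp (- (\<mu>/4) * (norm q)\<^sup>2)"
    by (simp add: algebra_simps flip: exp_add)
  with poly have "(1 + norm y)^k * exp (- (\<mu>/2) * (norm y)\<^sup>2)
      \<le> ((1 + r)^k * (1 + norm q)^k) * (exp (\<mu>/2 * r\<^sup>2) * exp (- (\<mu>/4) * (norm q)\<^sup>2))"
    using \<open>0 \<le> r\<close> by (intro mult_mono) auto
  then show ?thesis by (simp add: mult_ac)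
qed

lemma real_polynomial_function_polynomial_growth:
  assumes "real_polynomial_function p"
  obtains B k where "B \<ge> 0" and "\<And>q. \<bar>p q\<bar> \<le> B * (1 + norm q)^k"
proof -
  have "\<exists>B k. B \<ge> 0 \<and> (\<forall>q. \<bar>p q\<bar> \<le> B * (1 + norm q)^k)"
    using assms
  proof (induction rule: real_polynomial_function.induct)
    case (linear f)
    then obtain B where "B > 0" and B: "\<And>q. norm (f q) \<le> norm q * B"
      using bounded_linear.pos_bounded by blast
    have "\<bar>f q\<bar> \<le> B * (1 + norm q)^1" for q
      using B[of q] \<open>B > 0\<close> by (simp add: algebra_simps)
    then show ?case using \<open>B > 0\<close> by (intro exI[of _ B] exI[of _ 1]) auto
  next
    case (const c)
    then show ?case by (intro exI[of _ "\<bar>c\<bar>"] exI[of _ 0]) auto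
  next
    case (add f g)
    then obtain B1 k1 B2 k2 where B: "B1 \<ge> 0" "B2 \<ge> 0"
      "\<And>q. \<bar>f q\<bar> \<le> B1 * (1 + norm q)^k1" "\<And>q. \<bar>g q\<bar> \<le> B2 * (1 + norm q)^k2"
      by blast
    have "\<bar>f q + g q\<bar> \<le> (B1 + B2) * (1 + norm q)^(k1 + k2)" for q
    proof -
      have "(1 + norm q)^k1 \<le> (1 + norm q)^(k1 + k2)"
        and "(1 + norm q)^k2 \<le> (1 + norm q)^(k1 + k2)"
        by (auto intro: power_increasing)
      then have "B1 * (1 + norm q)^k1 + B2 * (1 + norm q)^k2
          \<le> (B1 + B2) * (1 + norm q)^(k1 + k2)"
        using B(1,2) by (simp add: distrib_right add_mono mult_left_mono)
      then show ?thesis using B(3,4)[of q] by linarith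
    qed
    then show ?case using B by (intro exI[of _ "B1 + B2"] exI[of _ "k1 + k2"]) auto
  next
    case (mult f g)
    then obtain B1 k1 B2 k2 where B: "B1 \<ge> 0" "B2 \<ge> 0"
      "\<And>q. \<bar>f q\<bar> \<le> B1 * (1 + norm q)^k1" "\<And>q. \<bar>g q\<bar> \<le> B2 * (1 + norm q)^k2"
      by blast
    have "\<bar>f q * g q\<bar> \<le> (B1 * (1 + norm q)^k1) * (B2 * (1 + norm q)^k2)" for q
      unfolding abs_mult using B by (intro mult_mono) auto
    then have "\<bar>f q * g q\<bar> \<le> (B1 * B2) * (1 + norm q)^(k1 + k2)" for q
      by (simp add: algebra_simps power_add)
    then show ?case using B by (intro exI[of _ "B1 * B2"] exI[of _ "k1 + k2"]) auto
  qed
  then show ?thesis using that by blast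
qed

lemma real_polynomial_function_matrix_vector_nth:
  fixes M :: "real^'n::finite^'m::finite"
  shows "real_polynomial_function (\<lambda>q. (M *v q) $ a)"
  by (intro real_polynomial_function.intros(1) bounded_linear_compose[OF bounded_linear_vec_nth]
      matrix_vector_mul_bounded_linear)

lemma real_polynomial_function_inner_matrix_vector:
  fixes M :: "real^'n::finite^'m::finite"
  shows "real_polynomial_function (\<lambda>q. (M *v q) \<bullet> w)"
  using bounded_linear_inner_left_comp[OF matrix_vector_mul_bounded_linear[of M]]
  by (rule real_polynomial_function.intros(1))

lemma real_polynomial_function_quadratic_form:
  fixes M :: "real^'n::finite^'n"
  shows "real_polynomial_function (\<lambda>q. q \<bullet> (M *v q))"
proof -
  have "real_polynomial_function (\<lambda>q. \<Sum>i\<in>UNIV. q $ i * (M *v q) $ i)"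
    by (intro real_polynomial_function_sum real_polynomial_function.intros(4)
        real_polynomial_function.intros(1)[OF bounded_linear_vec_nth]
        real_polynomial_function_matrix_vector_nth) simp
  then show ?thesis by (simp add: inner_vec_def)
qed

lemma continuous_on_real_polynomial_function:
  "real_polynomial_function p \<Longrightarrow> continuous_on S p"
  by (simp add: continuous_on_polymonial_function real_polynomial_function_eq)

section \<open>Directional derivatives\<close>

lemma bounded_linear_directional_derivative:
  assumes "bounded_linear f"
  shows "((\<lambda>s. f (y + s *\<^sub>R v)) has_real_derivative f v) (at 0)"
proof -
  have "f (y + s *\<^sub>R v) = f y + s * f v" for s
    using assms by (simp add: bounded_linear.linear linear_add linear_cmul)
  then show ?thesis by (auto intro!: derivative_eq_intros)
qed

lemma quadratic_form_directional_derivative: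
  fixes B :: "real^'n::finite^'n"
  shows "((\<lambda>s. (y + s *\<^sub>R v) \<bullet> (B *v (y + s *\<^sub>R v))) has_real_derivative
    v \<bullet> (B *v y) + y \<bullet> (B *v v)) (at 0)"
proof -
  have "(y + s *\<^sub>R v) \<bullet> (B *v (y + s *\<^sub>R v))
      = y \<bullet> (B *v y) + s * (v \<bullet> (B *v y) + y \<bullet> (B *v v)) + s * s * (v \<bullet> (B *v v))" for s
    by (simp add: matrix_vector_right_distrib matrix_vector_mult_scaleR inner_add_left
        inner_add_right algebra_simps)
  then show ?thesis by (auto intro!: derivative_eq_intros)
qed

lemma integral_translate_lborel:
  fixes F :: "'a::euclidean_space \<Rightarrow> real"
  assumes "integrable lborel F"
  shows "integrable lborel (\<lambda>q. F (q + c))"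
    and "(\<integral>q. F (q + c) \<partial>lborel) = integral\<^sup>L lborel F"
proof -
  have shift: "(+) c \<in> measurable lborel borel" by measurable
  have F: "F \<in> borel_measurable borel" using assms by measurable
  show "integrable lborel (\<lambda>q. F (q + c))"
    using integrable_distr_eq[OF shift F] assms by (simp add: lborel_distr_plus add.commute)
  show "(\<integral>q. F (q + c) \<partial>lborel) = integral\<^sup>L lborel F"
    using integral_distr[OF shift F] by (simp add: lborel_distr_plus add.commute)
qed

lemma directional_mean_value:
  fixes F F' :: "'a::real_normed_vector \<Rightarrow> real"
  assumes deriv: "\<And>y. ((\<lambda>s. F (y + s *\<^sub>R v)) has_real_derivative F' y) (at 0)" and "0 < t"
  obtains z where "0 < z" and "z < t" and "F (q + t *\<^sub>R v) - F q = t * F' (q + z *\<^sub>R v)"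
proof -
  have "((\<lambda>s. F (q + s *\<^sub>R v)) has_real_derivative F' (q + s *\<^sub>R v)) (at s)" for s
    using DERIV_shift[where f = "\<lambda>s. F (q + s *\<^sub>R v)" and x = 0 and z = s] deriv[of "q + s *\<^sub>R v"]
    by (simp add: algebra_simps scaleR_add_left)
  then show ?thesis
    using MVT2[of 0 t "\<lambda>s. F (q + s *\<^sub>R v)" "\<lambda>s. F' (q + s *\<^sub>R v)"] \<open>0 < t\<close> that by auto
qed

text \<open>The difference quotients of \<open>F\<close> along \<open>v\<close> all integrate to zero by translation invariance
  of Lebesgue measure; by the mean value theorem they are dominated by \<open>W\<close>, so their limit
  \<open>F'\<close> integrates to zero as well.\<close>
lemma integral_directional_derivative_eq_0:
  fixes F F' W :: "'a::euclidean_space \<Rightarrow> real"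
  assumes F: "integrable lborel F"
    and deriv: "\<And>y. ((\<lambda>s. F (y + s *\<^sub>R v)) has_real_derivative F' y) (at 0)"
    and W: "integrable lborel W"
    and dominated: "\<And>q s. 0 \<le> s \<Longrightarrow> s \<le> 1 \<Longrightarrow> \<bar>F' (q + s *\<^sub>R v)\<bar> \<le> W q"
  shows "integral\<^sup>L lborel F' = 0"
proof -
  define t where "t n = inverse (real (Suc n))" for n
  have t: "0 < t n" "t n \<le> 1" for n unfolding t_def by (auto simp: field_simps)
  define quot where "quot = (\<lambda>n q. (F (q + t n *\<^sub>R v) - F q) / t n)"
  have quot_meas: "quot n \<in> borel_measurable lborel" for n
    using F unfolding quot_def by measurable
  have quot_lim: "(\<lambda>n. quot n q) \<longlonglongrightarrow> F' q" for q
  proof -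
    have "((\<lambda>s. (F (q + s *\<^sub>R v) - F q) / s) \<longlongrightarrow> F' q) (at 0)"
      using deriv[of q] unfolding has_field_derivative_iff by simp
    moreover have "t \<longlonglongrightarrow> 0" "\<And>n. t n \<noteq> 0"
      using t LIMSEQ_inverse_real_of_nat unfolding t_def by auto
    ultimately show ?thesis
      unfolding quot_def tendsto_at_iff_sequentially o_def by blast
  qed
  have "(\<lambda>n. integral\<^sup>L lborel (quot n)) \<longlonglongrightarrow> integral\<^sup>L lborel F'"
  proof (rule integral_dominated_convergence[OF _ quot_meas W])
    show "F' \<in> borel_measurable lborel"
      using quot_lim quot_meas by (rule borel_measurable_LIMSEQ_real)
    show "AE q in lborel. (\<lambda>n. quot n q) \<longlonglongrightarrow> F' q" using quot_lim by simp
    show "AE q in lborel. norm (quot n q) \<le> W q" for n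
    proof (rule AE_I2)
      fix q
      obtain z where "0 < z" "z < t n" "F (q + t n *\<^sub>R v) - F q = t n * F' (q + z *\<^sub>R v)"
        using directional_mean_value[OF deriv t(1)] by blast
      then show "norm (quot n q) \<le> W q"
        using dominated[of z q] t[of n] by (simp add: quot_def)
    qed
  qed
  moreover have "integral\<^sup>L lborel (quot n) = 0" for n
  proof -
    have "integral\<^sup>L lborel (quot n)
        = ((\<integral>q. F (q + t n *\<^sub>R v) \<partial>lborel) - integral\<^sup>L lborel F) / t n"
      unfolding quot_def using integral_translate_lborel(1)[OF F] F by simp
    then show ?thesis using integral_translate_lborel(2)[OF F] by simp
  qed
  ultimately have "(\<lambda>n. 0) \<longlonglongrightarrow> integral\<^sup>L lborel F'" by simp
  then show ?thesis by (simp add: LIMSEQ_const_iff)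
qed

section \<open>Symmetric positive definite matrices\<close>

lemma inner_matrix_vector_transpose:
  fixes A :: "real^'n::finite^'m::finite"
  shows "(A *v x) \<bullet> y = x \<bullet> (transpose A *v y)"
  by (metis dot_lmul_matrix inner_commute transpose_matrix_vector)

lemma inner_matrix_vector_symmetric:
  fixes A :: "real^'n::finite^'n"
  assumes "transpose A = A"
  shows "x \<bullet> (A *v y) = (A *v x) \<bullet> y"
  using inner_matrix_vector_transpose[of A x y] assms by simp

lemma matrix_inv_mult:
  fixes A :: "real^'n::finite^'n"
  assumes "invertible A"
  shows "matrix_inv A ** A = mat 1" and "A ** matrix_inv A = mat 1"
  using someI_ex[OF assms[unfolded invertible_def]] unfolding matrix_inv_def by auto

lemma symmetric_matrix_inv:
  fixes A :: "real^'n::finite^'n"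
  assumes "transpose A = A" and "invertible A"
  shows "transpose (matrix_inv A) = matrix_inv A"
proof -
  have left: "transpose (matrix_inv A) ** A = mat 1"
  proof -
    have "transpose (matrix_inv A) ** A = transpose (transpose A ** matrix_inv A)"
      by (simp add: matrix_transpose_mul)
    also have "\<dots> = mat 1"
      using assms by (simp add: matrix_inv_mult(2) transpose_mat)
    finally show ?thesis .
  qed
  have "transpose (matrix_inv A) = transpose (matrix_inv A) ** (A ** matrix_inv A)"
    by (simp add: matrix_inv_mult(2)[OF assms(2)])
  also have "\<dots> = matrix_inv A"
    by (simp add: matrix_mul_assoc left)
  finally show ?thesis .
qed

lemma pos_def_invertible:
  fixes A :: "real^'n::finite^'n"
  assumes "\<And>x. x \<noteq> 0 \<Longrightarrow> 0 < x \<bullet> (A *v x)"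
  shows "invertible A"
proof -
  have "x = 0" if "A *v x = 0" for x
  proof (rule ccontr)
    assume "x \<noteq> 0"
    then have "0 < x \<bullet> (A *v x)" by (rule assms)
    with that show False by simp
  qed
  then show ?thesis unfolding invertible_left_inverse matrix_left_invertible_ker by blast
qed

lemma pos_def_matrix_inv:
  fixes A :: "real^'n::finite^'n"
  assumes pos: "\<And>x. x \<noteq> 0 \<Longrightarrow> 0 < x \<bullet> (A *v x)" and "x \<noteq> 0"
  shows "0 < x \<bullet> (matrix_inv A *v x)"
proof -
  define y where "y = matrix_inv A *v x"
  have "A *v y = x"
    unfolding y_def using matrix_inv_mult(2)[OF pos_def_invertible[OF pos]]
    by (simp add: matrix_vector_mul_assoc)
  then have "y \<noteq> 0" using \<open>x \<noteq> 0\<close> by (metis matrix_vector_mult_0_right)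
  then have "0 < y \<bullet> (A *v y)" by (rule pos)
  then have "0 < y \<bullet> x" using \<open>A *v y = x\<close> by simp
  then show ?thesis by (simp only: y_def inner_commute)
qed

text \<open>The quadratic form attains a positive minimum on the unit sphere.\<close>
lemma pos_def_coercive:
  fixes A :: "real^'n::finite^'n"
  assumes pos: "\<And>x. x \<noteq> 0 \<Longrightarrow> 0 < x \<bullet> (A *v x)"
  obtains \<mu> where "\<mu> > 0" and "\<And>x. \<mu> * (norm x)\<^sup>2 \<le> x \<bullet> (A *v x)"
proof -
  have "continuous_on (sphere 0 1) (\<lambda>x. x \<bullet> (A *v x))"
    by (intro continuous_on_real_polynomial_function real_polynomial_function_quadratic_form)
  moreover have "sphere (0::real^'n) 1 \<noteq> {}" by simp
  ultimately obtain u where u: "u \<in> sphere 0 1"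
    and min: "\<And>y. y \<in> sphere 0 1 \<Longrightarrow> u \<bullet> (A *v u) \<le> y \<bullet> (A *v y)"
    using continuous_attains_inf[OF compact_sphere] by blast
  have "(u \<bullet> (A *v u)) * (norm x)\<^sup>2 \<le> x \<bullet> (A *v x)" for x
  proof (cases "x = 0")
    case False
    define y where "y = (1 / norm x) *\<^sub>R x"
    have "y \<in> sphere 0 1" using False by (simp add: y_def)
    moreover have "y \<bullet> (A *v y) = (x \<bullet> (A *v x)) / (norm x)\<^sup>2"
      by (simp add: y_def matrix_vector_mult_scaleR power2_eq_square)
    ultimately have "u \<bullet> (A *v u) \<le> (x \<bullet> (A *v x)) / (norm x)\<^sup>2"
      using min by metis
    then show ?thesis using False by (simp add: pos_le_divide_eq)
  qed simp
  moreover have "u \<noteq> 0" using u by auto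
  then have "u \<bullet> (A *v u) > 0" by (rule pos)
  ultimately show ?thesis using that by blast
qed

lemma bounded_linear_transpose:
  "bounded_linear (transpose :: real^'n::finite^'m::finite \<Rightarrow> real^'m^'n)"
  by (intro linear_conv_bounded_linear[THEN iffD1] linearI)
    (simp_all add: transpose_def vec_eq_iff)

text \<open>Transposition is linear, so it commutes with differentiation, and \<open>C\<close> equals its
  transpose near \<open>x\<close>.\<close>
lemma partialC_symmetric:
  fixes C :: "real ^ 'd \<Rightarrow> ('n::finite, 'd::finite) mat"
  assumes "open \<Omega>" "x \<in> \<Omega>" "C differentiable (at x)"
    and symmetric: "\<And>y. y \<in> \<Omega> \<Longrightarrow> transpose (C y) = C y"
  shows "transpose (partialC C i x) = partialC C i x"
proof -
  define line where "line t = x + t *\<^sub>R axis i 1" for t :: real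
  obtain C' where C': "(C has_derivative C') (at x)"
    using assms(3) unfolding differentiable_def by blast
  have "(line has_derivative (\<lambda>t. t *\<^sub>R axis i 1)) (at 0)"
    unfolding line_def by (auto intro!: derivative_eq_intros)
  then have "((\<lambda>t. C (line t)) has_derivative (\<lambda>t. C' (t *\<^sub>R axis i 1))) (at 0)"
    using has_derivative_compose C' by (fastforce simp: line_def)
  moreover have "C' (t *\<^sub>R axis i 1) = t *\<^sub>R C' (axis i 1)" for t
    using linear_cmul[OF has_derivative_linear[OF C']] .
  ultimately have deriv: "((\<lambda>t. C (line t)) has_vector_derivative C' (axis i 1)) (at 0)"
    unfolding has_vector_derivative_def by simp
  then have partial: "partialC C i x = C' (axis i 1)"
    unfolding partialC_def line_def by (rule vector_derivative_at)
  have "((\<lambda>t. transpose (C (line t))) has_vector_derivative transpose (C' (axis i 1))) (at 0)"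
    using bounded_linear.has_vector_derivative[OF bounded_linear_transpose deriv] .
  moreover have "open (line -` \<Omega>)"
    unfolding line_def
    by (rule continuous_open_vimage[OF assms(1)]) (auto intro!: continuous_intros)
  moreover have "0 \<in> line -` \<Omega>"
    using assms(2) by (simp add: line_def)
  ultimately have "((\<lambda>t. C (line t)) has_vector_derivative transpose (C' (axis i 1))) (at 0)"
    by (rule has_vector_derivative_transform_within_open) (simp add: symmetric)
  then have "C' (axis i 1) = transpose (C' (axis i 1))"
    by (rule vector_derivative_unique_at[OF deriv])
  then show ?thesis unfolding partial by (rule HOL.sym)
qed

section \<open>Moments of a centred Gaussian\<close>

locale centered_gaussian =
  fixes C :: "real^'i::finite^'i"
  assumes symmetric: "transpose C = C"
    and pos_def: "\<And>q. q \<noteq> 0 \<Longrightarrow> 0 < q \<bullet> (C *v q)"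
begin

lemma invertible: "invertible C"
  using pos_def by (rule pos_def_invertible)

lemmas inv_mult = matrix_inv_mult[OF invertible]

lemma inv_symmetric: "transpose (matrix_inv C) = matrix_inv C"
  using symmetric invertible by (rule symmetric_matrix_inv)

definition weight :: "real^'i \<Rightarrow> real" where
  "weight q = exp (- (1/2) * (q \<bullet> (matrix_inv C *v q)))"

definition gauss_int :: "(real^'i \<Rightarrow> real) \<Rightarrow> real" where
  "gauss_int p = (\<integral>q. p q * weight q \<partial>lborel)"

definition centered_quadratic :: "real^'i^'i \<Rightarrow> real^'i \<Rightarrow> real" where
  "centered_quadratic M q = q \<bullet> (M *v q) - trace (M ** C)"

lemma real_polynomial_function_centered_quadratic:
  "real_polynomial_function (centered_quadratic M)"
  unfolding centered_quadratic_def[abs_def]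
  by (intro real_polynomial_function_diff real_polynomial_function_quadratic_form
      real_polynomial_function.intros(2))

lemmas real_polynomial_function_intros =
  real_polynomial_function.intros(2-4) real_polynomial_function_diff real_polynomial_function_sum
  real_polynomial_function_power real_polynomial_function.intros(1)[OF bounded_linear_vec_nth]
  real_polynomial_function_matrix_vector_nth real_polynomial_function_inner_matrix_vector
  real_polynomial_function_quadratic_form real_polynomial_function_centered_quadratic

lemma weight_pos: "weight q > 0"
  by (simp add: weight_def)

lemma continuous_weight: "continuous_on UNIV weight"
  unfolding weight_def
  by (intro continuous_intros continuous_on_real_polynomial_function
      real_polynomial_function_quadratic_form)

lemma polynomial_times_weight_dominated:
  assumes "real_polynomial_function p"
  obtains W where "integrable lborel W"
    and "\<And>q s. \<bar>s\<bar> \<le> 1 \<Longrightarrow> \<bar>p (q + s *\<^sub>R v) * weight (q + s *\<^sub>R v)\<bar> \<le> W q"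
proof -
  obtain B k where "B \<ge> 0" and B: "\<And>q. \<bar>p q\<bar> \<le> B * (1 + norm q)^k"
    using real_polynomial_function_polynomial_growth[OF assms] by blast
  obtain \<mu> where "\<mu> > 0" and \<mu>: "\<And>q. \<mu> * (norm q)\<^sup>2 \<le> q \<bullet> (matrix_inv C *v q)"
    using pos_def_coercive[OF pos_def_matrix_inv[OF pos_def]] by blast
  define c where "c = B * ((1 + norm v)^k * exp (\<mu>/2 * (norm v)\<^sup>2))"
  define W where "W q = c * ((1 + norm q)^k * exp (- (\<mu>/4) * (norm q)\<^sup>2))" for q :: "real^'i"
  have "integrable lborel W"
    unfolding W_def using integrable_power_one_plus_norm_times_gaussian[of "\<mu>/4" k] \<open>\<mu> > 0\<close>
    by (intro integrable_mult_right) auto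
  moreover have "\<bar>p (q + s *\<^sub>R v) * weight (q + s *\<^sub>R v)\<bar> \<le> W q" if "\<bar>s\<bar> \<le> 1" for q s
  proof -
    define y where "y = q + s *\<^sub>R v"
    have "norm (y - q) \<le> norm v"
      using that by (simp add: y_def mult_left_le_one_le)
    have "weight y \<le> exp (- (\<mu>/2) * (norm y)\<^sup>2)"
      unfolding weight_def using \<mu>[of y] by simp
    then have "\<bar>p y\<bar> * weight y \<le> (B * (1 + norm y)^k) * exp (- (\<mu>/2) * (norm y)\<^sup>2)"
      using B[of y] \<open>B \<ge> 0\<close> weight_pos[of y] by (intro mult_mono) auto
    then have "\<bar>p y * weight y\<bar> \<le> B * ((1 + norm y)^k * exp (- (\<mu>/2) * (norm y)\<^sup>2))"
      using weight_pos[of y] by (simp add: abs_mult mult.assoc)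
    also have "\<dots> \<le> W q"
      unfolding W_def c_def mult.assoc[symmetric]
      using shifted_gaussian_majorant[OF \<open>norm (y - q) \<le> norm v\<close>, of \<mu> k]
        \<open>\<mu> > 0\<close> \<open>B \<ge> 0\<close>
      by (simp add: mult.assoc mult_left_mono)
    finally show ?thesis unfolding y_def .
  qed
  ultimately show ?thesis using that by blast
qed

lemma integrable_polynomial_times_weight:
  assumes "real_polynomial_function p"
  shows "integrable lborel (\<lambda>q. p q * weight q)"
proof -
  obtain W where W_int: "integrable lborel W"
    and W: "\<And>q s. \<bar>s\<bar> \<le> 1 \<Longrightarrow> \<bar>p (q + s *\<^sub>R 0) * weight (q + s *\<^sub>R 0)\<bar> \<le> W q"
    using polynomial_times_weight_dominated[OF assms, where v = 0] by blast
  have "continuous_on UNIV (\<lambda>q. p q * weight q)"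
    by (intro continuous_on_mult continuous_on_real_polynomial_function[OF assms]
        continuous_weight)
  then have "(\<lambda>q. p q * weight q) \<in> borel_measurable lborel"
    by (simp add: borel_measurable_continuous_onI)
  moreover have "AE q in lborel. norm (p q * weight q) \<le> norm (W q)"
    using W[of 0] by (intro AE_I2) (simp add: order_trans[OF _ abs_ge_self])
  ultimately show ?thesis
    using W_int by (rule Bochner_Integration.integrable_bound[rotated])
qed

lemma gauss_int_add:
  "real_polynomial_function p \<Longrightarrow> real_polynomial_function r \<Longrightarrow>
    gauss_int (\<lambda>q. p q + r q) = gauss_int p + gauss_int r"
  unfolding gauss_int_def
  by (simp add: distrib_right Bochner_Integration.integral_add integrable_polynomial_times_weight)

lemma gauss_int_diff:
  "real_polynomial_function p \<Longrightarrow> real_polynomial_function r \<Longrightarrow>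
    gauss_int (\<lambda>q. p q - r q) = gauss_int p - gauss_int r"
  unfolding gauss_int_def
  by (simp add: left_diff_distrib Bochner_Integration.integral_diff
      integrable_polynomial_times_weight)

lemma gauss_int_cmult: "gauss_int (\<lambda>q. c * p q) = c * gauss_int p"
  unfolding gauss_int_def by (simp add: mult.assoc)

lemma gauss_int_sum:
  "finite S \<Longrightarrow> (\<And>i. i \<in> S \<Longrightarrow> real_polynomial_function (f i)) \<Longrightarrow>
    gauss_int (\<lambda>q. \<Sum>i\<in>S. f i q) = (\<Sum>i\<in>S. gauss_int (f i))"
  unfolding gauss_int_def
  by (simp add: sum_distrib_right Bochner_Integration.integral_sum
      integrable_polynomial_times_weight)

lemma has_integral_polynomial_times_weight:
  "real_polynomial_function p \<Longrightarrow> ((\<lambda>q. p q * weight q) has_integral gauss_int p) UNIV"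
  unfolding gauss_int_def
  by (rule has_integral_integral_lborel[OF integrable_polynomial_times_weight])

lemma weight_directional_derivative:
  "((\<lambda>s. weight (y + s *\<^sub>R v)) has_real_derivative - ((matrix_inv C *v y) \<bullet> v) * weight y)
    (at 0)"
proof -
  have "y \<bullet> (matrix_inv C *v v) = (matrix_inv C *v y) \<bullet> v"
    using inner_matrix_vector_symmetric[OF inv_symmetric] .
  then show ?thesis
    using DERIV_fun_exp[OF DERIV_cmult[OF quadratic_form_directional_derivative[of y v]],
        of "- (1/2)" "matrix_inv C"]
    by (simp add: weight_def inner_commute[of v] algebra_simps)
qed

text \<open>Gaussian integration by parts: the weight is annihilated by \<open>\<partial>\<^sub>v + (C\<^sup>-\<^sup>1 q) \<bullet> v\<close>,
  and the integral of a directional derivative vanishes.\<close>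
lemma gauss_int_by_parts:
  assumes h: "real_polynomial_function h" and D: "real_polynomial_function D"
    and deriv: "\<And>y. ((\<lambda>s. h (y + s *\<^sub>R v)) has_real_derivative D y) (at 0)"
  shows "gauss_int (\<lambda>q. (matrix_inv C *v q) \<bullet> v * h q) = gauss_int D"
proof -
  define P where "P q = D q - (matrix_inv C *v q) \<bullet> v * h q" for q
  have P: "real_polynomial_function P"
    unfolding P_def[abs_def] by (intro real_polynomial_function_intros h D)
  have "((\<lambda>s. h (y + s *\<^sub>R v) * weight (y + s *\<^sub>R v)) has_real_derivative P y * weight y)
      (at 0)" for y
    using DERIV_mult[OF deriv weight_directional_derivative] by (simp add: P_def algebra_simps)
  moreover obtain W where "integrable lborel W"
    and "\<And>q s. \<bar>s\<bar> \<le> 1 \<Longrightarrow> \<bar>P (q + s *\<^sub>R v) * weight (q + s *\<^sub>R v)\<bar> \<le> W q"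
    using polynomial_times_weight_dominated[OF P] by blast
  ultimately have "gauss_int P = 0"
    unfolding gauss_int_def
    by (intro integral_directional_derivative_eq_0[where F = "\<lambda>q. h q * weight q"]
        integrable_polynomial_times_weight h) auto
  moreover have "gauss_int P = gauss_int D - gauss_int (\<lambda>q. (matrix_inv C *v q) \<bullet> v * h q)"
    unfolding P_def[abs_def] by (intro gauss_int_diff real_polynomial_function_intros h D)
  ultimately show ?thesis by simp
qed

lemma inner_matrix_inv_column: "(matrix_inv C *v q) \<bullet> (C *v axis a 1) = q $ a"
proof -
  have "(matrix_inv C *v q) \<bullet> (C *v axis a 1) = q \<bullet> (matrix_inv C *v (C *v axis a 1))"
    using inner_matrix_vector_symmetric[OF inv_symmetric] by simp
  also have "\<dots> = q $ a"
    by (simp add: matrix_vector_mul_assoc inv_mult inner_axis)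
  finally show ?thesis .
qed

lemma gauss_int_coordinate_mult:
  assumes "real_polynomial_function g" and "real_polynomial_function D"
    and "\<And>y. ((\<lambda>s. g (y + s *\<^sub>R (C *v axis a 1))) has_real_derivative D y) (at 0)"
  shows "gauss_int (\<lambda>q. q $ a * g q) = gauss_int D"
  using gauss_int_by_parts[OF assms] by (simp add: inner_matrix_inv_column)

lemma gauss_int_centered_quadratic_mult:
  assumes h: "real_polynomial_function h" and Dh: "\<And>a. real_polynomial_function (Dh a)"
    and deriv: "\<And>a y. ((\<lambda>s. h (y + s *\<^sub>R (C *v axis a 1))) has_real_derivative Dh a y) (at 0)"
  shows "gauss_int (\<lambda>q. centered_quadratic M q * h q)
    = (\<Sum>a\<in>UNIV. gauss_int (\<lambda>q. (M *v q) $ a * Dh a q))"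
proof -
  have coordinate: "gauss_int (\<lambda>q. q $ a * ((M *v q) $ a * h q))
      = (M ** C) $ a $ a * gauss_int h + gauss_int (\<lambda>q. (M *v q) $ a * Dh a q)" for a
  proof -
    have lin: "bounded_linear (\<lambda>q. (M *v q) $ a)"
      by (intro bounded_linear_compose[OF bounded_linear_vec_nth] matrix_vector_mul_bounded_linear)
    have column: "(M *v (C *v axis a 1)) $ a = (M ** C) $ a $ a"
      by (simp only: matrix_vector_mul_assoc) (simp add: matrix_vector_mult_basis column_def)
    have "((\<lambda>s. (M *v (y + s *\<^sub>R (C *v axis a 1))) $ a * h (y + s *\<^sub>R (C *v axis a 1)))
        has_real_derivative (M ** C) $ a $ a * h y + Dh a y * (M *v y) $ a) (at 0)" for y
      using DERIV_mult[OF bounded_linear_directional_derivative[OF lin, where v = "C *v axis a 1"]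
          deriv[where a = a and y = y]]
      by (simp add: column)
    then have "gauss_int (\<lambda>q. q $ a * ((M *v q) $ a * h q))
        = gauss_int (\<lambda>q. (M ** C) $ a $ a * h q + Dh a q * (M *v q) $ a)"
      using h Dh by (intro gauss_int_coordinate_mult real_polynomial_function_intros)
    also have "\<dots> = gauss_int (\<lambda>q. (M ** C) $ a $ a * h q) + gauss_int (\<lambda>q. (M *v q) $ a * Dh a q)"
      by (subst mult.commute[of "Dh a _"]) (intro gauss_int_add real_polynomial_function_intros h Dh)
    finally show ?thesis by (simp only: gauss_int_cmult)
  qed
  have sum: "gauss_int (\<lambda>q. \<Sum>a\<in>UNIV. q $ a * ((M *v q) $ a * h q))
      = (\<Sum>a\<in>UNIV. gauss_int (\<lambda>q. q $ a * ((M *v q) $ a * h q)))"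
    by (rule gauss_int_sum) (simp, intro real_polynomial_function_intros h)
  have "gauss_int (\<lambda>q. centered_quadratic M q * h q)
      = gauss_int (\<lambda>q. (\<Sum>a\<in>UNIV. q $ a * ((M *v q) $ a * h q)) - trace (M ** C) * h q)"
    by (simp add: centered_quadratic_def inner_vec_def left_diff_distrib sum_distrib_right
        mult.assoc)
  also have "\<dots> = gauss_int (\<lambda>q. \<Sum>a\<in>UNIV. q $ a * ((M *v q) $ a * h q))
      - gauss_int (\<lambda>q. trace (M ** C) * h q)"
    by (intro gauss_int_diff real_polynomial_function_intros h; simp)
  also have "\<dots> = (\<Sum>a\<in>UNIV. gauss_int (\<lambda>q. q $ a * ((M *v q) $ a * h q)))
      - trace (M ** C) * gauss_int h"
    by (simp only: gauss_int_cmult sum)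
  also have "\<dots> = (\<Sum>a\<in>UNIV. gauss_int (\<lambda>q. (M *v q) $ a * Dh a q))"
    by (simp add: coordinate sum.distrib trace_def sum_distrib_right)
  finally show ?thesis .
qed

lemma gauss_int_centered_quadratic: "gauss_int (centered_quadratic B) = 0"
proof -
  have "gauss_int (\<lambda>q. centered_quadratic B q * 1)
      = (\<Sum>a\<in>UNIV. gauss_int (\<lambda>q. (B *v q) $ a * 0))"
    by (intro gauss_int_centered_quadratic_mult real_polynomial_function.intros(2) DERIV_const)
  then show ?thesis by (simp add: gauss_int_def)
qed

lemma gauss_int_quadratic_form:
  "gauss_int (\<lambda>q. q \<bullet> (B *v q)) = trace (B ** C) * gauss_int (\<lambda>q. 1)"
proof -
  have "gauss_int (centered_quadratic B)
      = gauss_int (\<lambda>q. q \<bullet> (B *v q)) - gauss_int (\<lambda>q. trace (B ** C))"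
    unfolding centered_quadratic_def by (intro gauss_int_diff real_polynomial_function_intros)
  then show ?thesis
    using gauss_int_centered_quadratic[of B] gauss_int_cmult[of "trace (B ** C)" "\<lambda>q. 1"] by simp
qed

lemma centered_quadratic_directional_derivative:
  assumes "transpose S = S"
  shows "((\<lambda>s. centered_quadratic S (y + s *\<^sub>R (C *v axis a 1))) has_real_derivative
    2 * ((C ** S) *v y) $ a) (at 0)"
proof -
  have "(C *v axis a 1) \<bullet> (S *v y) = ((C ** S) *v y) $ a"
    using inner_matrix_vector_symmetric[OF symmetric, of "axis a 1" "S *v y"]
    by (simp add: matrix_vector_mul_assoc inner_axis')
  moreover have "y \<bullet> (S *v (C *v axis a 1)) = (C *v axis a 1) \<bullet> (S *v y)"
    using inner_matrix_vector_symmetric[OF assms, of y "C *v axis a 1"] by (simp add: inner_commute)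
  ultimately show ?thesis
    using DERIV_diff[OF quadratic_form_directional_derivative[of y "C *v axis a 1" S]
        DERIV_const[of "trace (S ** C)"]]
    by (simp add: centered_quadratic_def[abs_def])
qed

lemma gauss_int_quadratic_form_mult_centered_quadratic:
  assumes "transpose S = S"
  shows "gauss_int (\<lambda>q. q \<bullet> (N *v q) * centered_quadratic S q)
    = 2 * trace (transpose N ** C ** S ** C) * gauss_int (\<lambda>q. 1)"
proof -
  have "gauss_int (\<lambda>q. centered_quadratic N q * centered_quadratic S q)
      = (\<Sum>a\<in>UNIV. gauss_int (\<lambda>q. (N *v q) $ a * (2 * ((C ** S) *v q) $ a)))"
    by (intro gauss_int_centered_quadratic_mult real_polynomial_function_intros
        centered_quadratic_directional_derivative assms)
  also have "\<dots> = gauss_int (\<lambda>q. \<Sum>a\<in>UNIV. (N *v q) $ a * (2 * ((C ** S) *v q) $ a))"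
    by (rule gauss_int_sum[symmetric]) (simp, intro real_polynomial_function_intros)
  also have "\<dots> = 2 * gauss_int (\<lambda>q. q \<bullet> ((transpose N ** C ** S) *v q))"
  proof -
    have "(\<Sum>a\<in>UNIV. (N *v q) $ a * (2 * ((C ** S) *v q) $ a)) = 2 * ((N *v q) \<bullet> ((C ** S) *v q))" for q
      by (simp add: inner_vec_def sum_distrib_left mult.left_commute)
    also have "\<dots> q = 2 * (q \<bullet> ((transpose N ** C ** S) *v q))" for q
      by (simp add: inner_matrix_vector_transpose matrix_vector_mul_assoc matrix_mul_assoc)
    finally show ?thesis by (simp add: gauss_int_cmult)
  qed
  finally have "gauss_int (\<lambda>q. centered_quadratic N q * centered_quadratic S q)
      = 2 * trace (transpose N ** C ** S ** C) * gauss_int (\<lambda>q. 1)"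
    by (simp add: gauss_int_quadratic_form)
  moreover have "gauss_int (\<lambda>q. centered_quadratic N q * centered_quadratic S q
        + trace (N ** C) * centered_quadratic S q)
      = gauss_int (\<lambda>q. centered_quadratic N q * centered_quadratic S q)
        + gauss_int (\<lambda>q. trace (N ** C) * centered_quadratic S q)"
    by (intro gauss_int_add real_polynomial_function_intros)
  moreover have "(\<lambda>q. centered_quadratic N q * centered_quadratic S q + trace (N ** C) * centered_quadratic S q)
      = (\<lambda>q. q \<bullet> (N *v q) * centered_quadratic S q)"
    by (simp add: centered_quadratic_def[of N] algebra_simps)
  ultimately show ?thesis
    by (simp add: gauss_int_cmult gauss_int_centered_quadratic)
qed

lemma gauss_int_centered_quadratic_square_mult:
  assumes M: "transpose M = M" and A: "transpose A = A"
  shows "gauss_int (\<lambda>q. (centered_quadratic M q)\<^sup>2 * centered_quadratic A q)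
    = 8 * trace (M ** C ** M ** C ** A ** C) * gauss_int (\<lambda>q. 1)"
proof -
  let ?Y = "centered_quadratic M" and ?X = "centered_quadratic A"
  have deriv: "((\<lambda>s. ?Y (y + s *\<^sub>R (C *v axis a 1)) * ?X (y + s *\<^sub>R (C *v axis a 1)))
      has_real_derivative 2 * ((C ** M) *v y) $ a * ?X y + ?Y y * (2 * ((C ** A) *v y) $ a)) (at 0)"
    for a y
    using DERIV_mult[OF centered_quadratic_directional_derivative[OF M, where y = y and a = a]
        centered_quadratic_directional_derivative[OF A, where y = y and a = a]]
    by (simp add: mult.commute)
  have transpose_MCM: "transpose (M ** C ** M) = M ** C ** M"
    by (simp add: matrix_transpose_mul M symmetric matrix_mul_assoc)
  have transpose_MCA: "transpose (M ** C ** A) = A ** C ** M"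
    by (simp add: matrix_transpose_mul M A symmetric matrix_mul_assoc)
  have cyclic: "trace (A ** C ** M ** C ** M ** C) = trace (M ** C ** M ** C ** A ** C)"
    using trace_mul_sym[of "A ** C" "M ** C ** M ** C"] by (simp add: matrix_mul_assoc)
  have "gauss_int (\<lambda>q. ?Y q * (?Y q * ?X q)) = (\<Sum>a\<in>UNIV. gauss_int (\<lambda>q. (M *v q) $ a
      * (2 * ((C ** M) *v q) $ a * ?X q + ?Y q * (2 * ((C ** A) *v q) $ a))))"
    by (intro gauss_int_centered_quadratic_mult real_polynomial_function_intros deriv)
  also have "\<dots> = gauss_int (\<lambda>q. \<Sum>a\<in>UNIV. (M *v q) $ a
      * (2 * ((C ** M) *v q) $ a * ?X q + ?Y q * (2 * ((C ** A) *v q) $ a)))"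
    by (rule gauss_int_sum[symmetric]) (simp, intro real_polynomial_function_intros)
  also have "\<dots> = gauss_int (\<lambda>q. 2 * (q \<bullet> ((M ** C ** M) *v q) * ?X q)
      + 2 * (q \<bullet> ((M ** C ** A) *v q) * ?Y q))"
  proof -
    have "(\<Sum>a\<in>UNIV. (M *v q) $ a * (2 * ((C ** M) *v q) $ a * ?X q + ?Y q * (2 * ((C ** A) *v q) $ a)))
        = 2 * ((M *v q) \<bullet> ((C ** M) *v q) * ?X q) + 2 * ((M *v q) \<bullet> ((C ** A) *v q) * ?Y q)" for q
      by (simp add: inner_vec_def sum_distrib_left sum_distrib_right sum.distrib algebra_simps)
    also have "\<dots> q = 2 * (q \<bullet> ((M ** C ** M) *v q) * ?X q) + 2 * (q \<bullet> ((M ** C ** A) *v q) * ?Y q)"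
      for q by (simp add: inner_matrix_vector_transpose M matrix_vector_mul_assoc matrix_mul_assoc)
    finally show ?thesis by simp
  qed
  also have "\<dots> = 2 * gauss_int (\<lambda>q. q \<bullet> ((M ** C ** M) *v q) * ?X q)
      + 2 * gauss_int (\<lambda>q. q \<bullet> ((M ** C ** A) *v q) * ?Y q)"
    by (simp only: gauss_int_cmult[symmetric]) (intro gauss_int_add real_polynomial_function_intros)
  also have "\<dots> = 8 * trace (M ** C ** M ** C ** A ** C) * gauss_int (\<lambda>q. 1)"
    by (simp add: gauss_int_quadratic_form_mult_centered_quadratic M A transpose_MCM transpose_MCA
        cyclic matrix_mul_assoc)
  finally show ?thesis by (simp add: power2_eq_square mult.assoc)
qed

text \<open>The quadratic part contributes \<open>2 tr(MCMCAC)\<close>, the constant nothing, and the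
  square \<open>-8/4 tr(MCMCAC)\<close>.\<close>
lemma gauss_int_remainder_orthogonal:
  assumes M: "transpose M = M" and A: "transpose A = A"
  shows "gauss_int (\<lambda>q. (q \<bullet> ((M ** C ** M) *v q) - c - (centered_quadratic M q)\<^sup>2 / 4)
    * centered_quadratic A q) = 0"
proof -
  let ?Q = "\<lambda>q. q \<bullet> ((M ** C ** M) *v q)" and ?Y = "centered_quadratic M" and ?X = "centered_quadratic A"
  have MCM: "transpose (M ** C ** M) = M ** C ** M"
    by (simp add: matrix_transpose_mul M symmetric matrix_mul_assoc)
  have "(\<lambda>q. (?Q q - c - (?Y q)\<^sup>2 / 4) * ?X q)
      = (\<lambda>q. (?Q q * ?X q - c * ?X q) - 1/4 * ((?Y q)\<^sup>2 * ?X q))"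
    by (simp add: algebra_simps)
  then have "gauss_int (\<lambda>q. (?Q q - c - (?Y q)\<^sup>2 / 4) * ?X q)
      = gauss_int (\<lambda>q. ?Q q * ?X q - c * ?X q) - gauss_int (\<lambda>q. 1/4 * ((?Y q)\<^sup>2 * ?X q))"
    by (simp only:) (intro gauss_int_diff real_polynomial_function_intros)
  also have "\<dots> = gauss_int (\<lambda>q. ?Q q * ?X q) - gauss_int (\<lambda>q. c * ?X q)
      - gauss_int (\<lambda>q. 1/4 * ((?Y q)\<^sup>2 * ?X q))"
    by (subst gauss_int_diff) (intro real_polynomial_function_intros refl)+
  also have "\<dots> = 2 * trace (M ** C ** M ** C ** A ** C) * gauss_int (\<lambda>q. 1) - c * 0
      - 1/4 * (8 * trace (M ** C ** M ** C ** A ** C) * gauss_int (\<lambda>q. 1))"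
    by (simp only: gauss_int_cmult gauss_int_quadratic_form_mult_centered_quadratic[OF A] MCM
        gauss_int_centered_quadratic gauss_int_centered_quadratic_square_mult[OF M A])
  finally show ?thesis by simp
qed

end

section \<open>The remainder term\<close>

lemma rho_eq_sum:
  fixes C :: "real ^ 'd \<Rightarrow> ('n::finite, 'd::finite) mat"
  assumes inv: "matrix_inv (C x) ** C x = mat 1"
  defines "M i \<equiv> matrix_inv (C x) ** partialC C i x ** matrix_inv (C x)"
  shows "rho C x q = (\<Sum>i\<in>UNIV. q \<bullet> ((M i ** C x ** M i) *v q) - trace (M i ** C x ** M i ** C x) / 2
    - (q \<bullet> (M i *v q) - trace (M i ** C x))\<^sup>2 / 4)"
proof -
  define P where "P i = matrix_inv (C x) ** partialC C i x" for i
  have MC: "M i ** C x = P i" for i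
  proof -
    have "M i ** C x = P i ** (matrix_inv (C x) ** C x)"
      by (simp add: M_def P_def matrix_mul_assoc)
    then show ?thesis by (simp add: inv)
  qed
  have PK: "P i ** matrix_inv (C x) = M i" for i
    by (simp add: M_def P_def)
  have "P i ** P i ** matrix_inv (C x) = M i ** C x ** M i"
    and "trace (P i ** P i) = trace (M i ** C x ** M i ** C x)"
    and "trace (P i) = trace (M i ** C x)" for i
    using MC[of i] PK[of i] by (metis matrix_mul_assoc)+
  then show ?thesis
    unfolding rho_def Let_def P_def[symmetric] PK
    by (simp add: sum_subtractf sum_divide_distrib)
qed

lemma has_integral_rho_times_tangent_vector:
  fixes C :: "real ^ 'd \<Rightarrow> ('n::finite, 'd::finite) mat"
  assumes "centered_gaussian (C x)"
    and partial_sym: "\<And>i. transpose (partialC C i x) = partialC C i x"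
    and A: "transpose A = A"
  shows "((\<lambda>q. rho C x q * ((q \<bullet> (A *v q) - trace (A ** C x)) * gaussian C x q)) has_integral 0) UNIV"
proof -
  interpret centered_gaussian "C x" by fact
  define M where "M i = matrix_inv (C x) ** partialC C i x ** matrix_inv (C x)" for i
  have M_sym: "transpose (M i) = M i" for i
    using partial_sym by (simp add: M_def matrix_transpose_mul inv_symmetric matrix_mul_assoc)
  define r where "r i q = q \<bullet> ((M i ** C x ** M i) *v q) - trace (M i ** C x ** M i ** C x) / 2
    - (centered_quadratic (M i) q)\<^sup>2 / 4" for i q
  have rho: "rho C x q = (\<Sum>i\<in>UNIV. r i q)" for q
    unfolding r_def M_def rho_eq_sum[where C = C and x = x, OF inv_mult(1)]
    by (simp add: centered_quadratic_def)
  have poly: "real_polynomial_function (\<lambda>q. r i q * centered_quadratic A q)" for i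
    unfolding r_def by (intro real_polynomial_function_intros real_polynomial_function_divide)
  have "gauss_int (\<lambda>q. \<Sum>i\<in>UNIV. r i q * centered_quadratic A q)
      = (\<Sum>i\<in>UNIV. gauss_int (\<lambda>q. r i q * centered_quadratic A q))"
    using poly by (intro gauss_int_sum) simp_all
  also have "\<dots> = 0"
    unfolding r_def by (simp add: gauss_int_remainder_orthogonal A M_sym)
  moreover have "real_polynomial_function (\<lambda>q. \<Sum>i\<in>UNIV. r i q * centered_quadratic A q)"
    using poly by (intro real_polynomial_function_sum) auto
  ultimately have "((\<lambda>q. (\<Sum>i\<in>UNIV. r i q * centered_quadratic A q) * weight q
      / sqrt ((2 * pi) ^ CARD('n \<times> 'd) * det (C x))) has_integral 0) UNIV"
    using has_integral_divide[OF has_integral_polynomial_times_weight] by fastforce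
  moreover have "rho C x q * ((q \<bullet> (A *v q) - trace (A ** C x)) * gaussian C x q)
      = (\<Sum>i\<in>UNIV. r i q * centered_quadratic A q) * weight q
        / sqrt ((2 * pi) ^ CARD('n \<times> 'd) * det (C x))" for q
    by (simp add: rho gaussian_def weight_def centered_quadratic_def sum_distrib_right mult.assoc)
  ultimately show ?thesis by simp
qed

theorem proposition2:
  fixes \<Omega> :: "(real ^ 'd) set"
    and C :: "real ^ 'd \<Rightarrow> ('n::finite, 'd::finite) mat"
  assumes "open \<Omega>"
    and "smooth_on \<Omega> C"
    and "\<forall>x\<in>\<Omega>. C x \<in> Zset"
  shows "\<forall>x\<in>\<Omega>. \<forall>\<phi>\<in>tangent_space C.
           ((\<lambda>q. rho C x q * \<phi> x q) has_integral 0) UNIV"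
proof (intro ballI)
  fix x \<phi> assume "x \<in> \<Omega>" and "\<phi> \<in> tangent_space C"
  then obtain A where A: "\<forall>y. block_diag (A y) \<and> sym_mat (A y)"
    and \<phi>: "\<phi> = (\<lambda>x q. (q \<bullet> (A x *v q) - trace (A x ** C x)) * gaussian C x q)"
    unfolding tangent_space_def by blast
  have C_sym: "\<And>y. y \<in> \<Omega> \<Longrightarrow> transpose (C y) = C y"
    and "\<And>q. q \<noteq> 0 \<Longrightarrow> 0 < q \<bullet> (C x *v q)"
    using assms(3) \<open>x \<in> \<Omega>\<close> unfolding Zset_def sym_mat_def pos_def_def by auto
  then have "centered_gaussian (C x)"
    using \<open>x \<in> \<Omega>\<close> by unfold_locales auto
  have "Ck_on (Suc 0) C \<Omega>"
    using assms(2) unfolding smooth_on_def by blast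
  then have "C differentiable (at x)"
    using \<open>x \<in> \<Omega>\<close> unfolding differentiable_def by auto
  then have "transpose (partialC C i x) = partialC C i x" for i
    using partialC_symmetric[OF assms(1) \<open>x \<in> \<Omega>\<close>] C_sym by blast
  then show "((\<lambda>q. rho C x q * \<phi> x q) has_integral 0) UNIV"
    using has_integral_rho_times_tangent_vector[where C = C and x = x, OF \<open>centered_gaussian (C x)\<close>] A
    unfolding \<phi> sym_mat_def by blast
qed

end
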